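(* For every integer $g \geq 1$, the matching number (the maximum cardinality of a matching) of the graph $\mathcal{F}_g$ is $\frac{4^g+8}{6}$.
   Context: The graphs $\mathcal{F}_g$, $g\ge 1$, are defined recursively. $\mathcal{F}_1$ is the 4-cycle (quadrangle). For $g>1$, $\mathcal{F}_g$ is obtained from $\mathcal{F}_{g-1}$ by replacing every edge $\{v_i,v_j\}$ of $\mathcal{F}_{g-1}$ by a quadrangle in which $v_i$ and $v_j$ are diagonal vertices: the edge $\{v_i,v_j\}$ is deleted, two new vertices $w,w'$ are added, and the four edges $\{v_i,w\},\{w,v_j\},\{v_i,w'\},\{w',v_j\}$ are added. Thus $\mathcal{F}_g$ has $\frac{2}{3}(4^g+2)$ vertices and $4^g$ edges. A matching is a set of edges no two of which share a vertex. *)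

theory Defs
  imports Complex_Main
begin

text \<open>Vertices: the four vertices of the initial quadrangle are V 0..V 3; when an edge
  stored as the pair (u,v) is replaced by a quadrangle, the two new vertices are
  W u v False and W u v True (fresh, since each edge is stored exactly once).\<close>
datatype vtx = V nat | W vtx vtx bool

text \<open>Oriented edge list: FE 0 is F_1 (the 4-cycle), FE (Suc n) is obtained from FE n by
  replacing every edge (u,v) by the quadrangle u - w - v - w' - u.\<close>
fun FE :: "nat \<Rightarrow> (vtx \<times> vtx) set" where
  "FE 0 = {(V 0, V 1), (V 1, V 2), (V 2, V 3), (V 3, V 0)}"
| "FE (Suc n) = (\<Union>(u, v) \<in> FE n. \<Union>b \<in> UNIV.
      {(u, W u v b), (W u v b, v)})"

definition F :: "nat \<Rightarrow> vtx set set" where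
  "F g = (\<lambda>(u, v). {u, v}) ` FE (g - 1)"

definition is_matching :: "'a set set \<Rightarrow> 'a set set \<Rightarrow> bool" where
  "is_matching E M \<longleftrightarrow> M \<subseteq> E \<and> (\<forall>e1\<in>M. \<forall>e2\<in>M. e1 \<noteq> e2 \<longrightarrow> e1 \<inter> e2 = {})"

definition matching_number :: "'a set set \<Rightarrow> nat" where
  "matching_number E = Max (card ` {M. is_matching E M})"

end

theory Submission
  imports Defs
begin

text \<open>Every edge of \<open>F (g + 1)\<close> joins a vertex of \<open>F g\<close> to a vertex created in the last
  step, so the old vertices cover all edges and bound every matching by the number of vertices
  of \<open>F g\<close>. Conversely, every old vertex \<open>v\<close> is the head of some edge \<open>(u, v)\<close> of \<open>F g\<close>, and
  the edges \<open>{v, W u v False}\<close> form a matching of that size, the new endpoints being distinct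
  for distinct \<open>v\<close>. Hence the matching number of \<open>F (g + 1)\<close> is \<open>2 (4 ^ g + 2) / 3\<close>, which is
  \<open>(4 ^ (g + 1) + 8) / 6\<close>; for the quadrangle \<open>F 1\<close> the value 2 is checked directly.\<close>

lemma card_matching_le_card_cover:
  assumes "is_matching E M" and "finite S" and "\<And>e. e \<in> E \<Longrightarrow> e \<inter> S \<noteq> {}"
  shows "card M \<le> card S"
proof -
  define pick where "pick e = (SOME x. x \<in> e \<inter> S)" for e
  have pick: "pick e \<in> e \<inter> S" if "e \<in> M" for e
  proof -
    from that assms(1) have "e \<in> E" by (auto simp: is_matching_def)
    with assms(3) have "\<exists>x. x \<in> e \<inter> S" by blast
    then show ?thesis unfolding pick_def by (rule someI_ex)
  qed
  have "inj_on pick M"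
  proof (rule inj_onI)
    fix e e' assume "e \<in> M" "e' \<in> M" "pick e = pick e'"
    then have "e \<inter> e' \<noteq> {}" using pick by (metis IntD1 disjoint_iff)
    with \<open>e \<in> M\<close> \<open>e' \<in> M\<close> assms(1) show "e = e'" by (auto simp: is_matching_def)
  qed
  moreover have "pick ` M \<subseteq> S" using pick by blast
  ultimately show ?thesis using assms(2) by (rule card_inj_on_le)
qed

lemma matching_numberI:
  assumes "is_matching E M" and "card M = k" and "\<And>M'. is_matching E M' \<Longrightarrow> card M' \<le> k"
  shows "matching_number E = k"
  unfolding matching_number_def
proof (rule Max_eqI)
  show "finite (card ` {M. is_matching E M})"
    by (rule finite_subset[of _ "{..k}"]) (use assms(3) in auto)
qed (use assms in auto)

lemma matching_number_F_1: "matching_number (F 1) = 2"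
proof (rule matching_numberI)
  have F_1: "F 1 = {{V 0, V 1}, {V 1, V 2}, {V 2, V 3}, {V 3, V 0}}"
    by (auto simp: F_def)
  show "is_matching (F 1) {{V 0, V 1}, {V 2, V 3}}"
    unfolding is_matching_def F_1 by auto
  show "card {{V 0, V 1}, {V 2, V 3}} = 2"
    by (simp add: doubleton_eq_iff)
  have cover: "e \<inter> {V 0, V 2} \<noteq> {}" if "e \<in> F 1" for e
    using that unfolding F_1 by auto
  fix M assume "is_matching (F 1) M"
  then have "card M \<le> card {V 0, V 2}"
    by (rule card_matching_le_card_cover[OF _ _ cover]) simp
  then show "card M \<le> 2" by simp
qed

lemma mem_FE_Suc_iff:
  "p \<in> FE (Suc n) \<longleftrightarrow> (\<exists>u v b. (u, v) \<in> FE n \<and> (p = (u, W u v b) \<or> p = (W u v b, v)))"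
  by auto

declare FE.simps(2)[simp del]

fun depth :: "vtx \<Rightarrow> nat" where
  "depth (V k) = 0"
| "depth (W u v b) = Suc (max (depth u) (depth v))"

lemma max_depth_FE: "(u, v) \<in> FE n \<Longrightarrow> max (depth u) (depth v) = n"
proof (induction n arbitrary: u v)
  case (Suc n)
  then obtain u' v' b where "(u', v') \<in> FE n" "(u, v) = (u', W u' v' b) \<or> (u, v) = (W u' v' b, v')"
    unfolding mem_FE_Suc_iff by blast
  moreover from \<open>(u', v') \<in> FE n\<close> have "max (depth u') (depth v') = n" by (rule Suc.IH)
  ultimately show ?case by auto
qed auto

text \<open>\<open>FV n\<close> is the vertex set of \<open>F (n + 1)\<close>, just as \<open>FE n\<close> is its edge set.\<close>

definition FV :: "nat \<Rightarrow> vtx set" where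
  "FV n = fst ` FE n \<union> snd ` FE n"

definition new_vertices :: "nat \<Rightarrow> vtx set" where
  "new_vertices n = {W u v b | u v b. (u, v) \<in> FE n}"

lemma mem_FV_iff: "x \<in> FV n \<longleftrightarrow> (\<exists>y. (x, y) \<in> FE n \<or> (y, x) \<in> FE n)"
  unfolding FV_def by force

lemma depth_le_if_mem_FV: "x \<in> FV n \<Longrightarrow> depth x \<le> n"
  unfolding mem_FV_iff using max_depth_FE by fastforce

lemma depth_new_vertex: "x \<in> new_vertices n \<Longrightarrow> depth x = Suc n"
  unfolding new_vertices_def using max_depth_FE by auto

lemma FV_disjoint_new_vertices: "FV n \<inter> new_vertices n = {}"
  using depth_le_if_mem_FV depth_new_vertex by fastforce

lemma FV_Suc: "FV (Suc n) = FV n \<union> new_vertices n"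
proof (intro equalityI subsetI)
  fix x assume "x \<in> FV (Suc n)"
  then show "x \<in> FV n \<union> new_vertices n"
    unfolding Un_iff mem_FV_iff mem_FE_Suc_iff new_vertices_def by auto
next
  fix x assume "x \<in> FV n \<union> new_vertices n"
  then consider y where "(x, y) \<in> FE n" | y where "(y, x) \<in> FE n"
    | u v b where "(u, v) \<in> FE n" "x = W u v b"
    unfolding Un_iff mem_FV_iff new_vertices_def by blast
  then show "x \<in> FV (Suc n)"
  proof cases
    case (1 y)
    then have "(x, W x y False) \<in> FE (Suc n)" unfolding mem_FE_Suc_iff by blast
    then show ?thesis unfolding mem_FV_iff by blast
  next
    case (2 y)
    then have "(W y x False, x) \<in> FE (Suc n)" unfolding mem_FE_Suc_iff by blast
    then show ?thesis unfolding mem_FV_iff by blast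
  next
    case (3 u v b)
    then have "(u, x) \<in> FE (Suc n)" unfolding mem_FE_Suc_iff by blast
    then show ?thesis unfolding mem_FV_iff by blast
  qed
qed

lemma in_edge_if_mem_FV: "x \<in> FV n \<Longrightarrow> \<exists>u. (u, x) \<in> FE n"
proof (induction n arbitrary: x)
  case 0
  then show ?case by (auto simp: FV_def)
next
  case (Suc n)
  then consider "x \<in> FV n" | u v b where "(u, v) \<in> FE n" "x = W u v b"
    unfolding FV_Suc new_vertices_def by blast
  then show ?case
  proof cases
    case 1
    with Suc.IH obtain u where "(u, x) \<in> FE n" by blast
    then have "(W u x False, x) \<in> FE (Suc n)" by (auto simp: mem_FE_Suc_iff)
    then show ?thesis ..
  qed (auto simp: mem_FE_Suc_iff)
qed

lemma FE_Suc_eq: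
  "FE (Suc n) = (\<lambda>((u, v), b). (u, W u v b)) ` (FE n \<times> UNIV)
              \<union> (\<lambda>((u, v), b). (W u v b, v)) ` (FE n \<times> UNIV)"
  unfolding set_eq_iff mem_FE_Suc_iff by (auto intro: rev_image_eqI[of "((u, v), b)" for u v b])

lemma finite_FE: "finite (FE n)"
  by (induction n) (simp_all add: FE_Suc_eq)

lemma finite_FV: "finite (FV n)"
  unfolding FV_def using finite_FE by blast

lemma card_FE: "card (FE n) = 4 ^ Suc n"
proof (induction n)
  case 0
  then show ?case by (simp add: numeral_eq_Suc)
next
  case (Suc n)
  let ?left = "(\<lambda>((u, v), b). (u, W u v b)) ` (FE n \<times> UNIV)"
  let ?right = "(\<lambda>((u, v), b). (W u v b, v)) ` (FE n \<times> UNIV)"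
  have card_left: "card ?left = 2 * card (FE n)"
    by (subst card_image) (auto simp: inj_on_def card_cartesian_product)
  have card_right: "card ?right = 2 * card (FE n)"
    by (subst card_image) (auto simp: inj_on_def card_cartesian_product)
  have "?left \<inter> ?right = {}"
    using max_depth_FE by fastforce
  then have "card (FE (Suc n)) = card ?left + card ?right"
    unfolding FE_Suc_eq by (simp add: card_Un_disjoint finite_FE)
  then show ?case using card_left card_right Suc.IH by simp
qed

lemma new_vertices_eq_image: "new_vertices n = (\<lambda>((u, v), b). W u v b) ` (FE n \<times> UNIV)"
  unfolding new_vertices_def by force

lemma finite_new_vertices: "finite (new_vertices n)"
  unfolding new_vertices_eq_image by (simp add: finite_FE)

lemma card_new_vertices: "card (new_vertices n) = 2 * 4 ^ Suc n"
proof -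
  have "card (new_vertices n) = card (FE n \<times> (UNIV :: bool set))"
    unfolding new_vertices_eq_image by (rule card_image) (auto simp: inj_on_def)
  then show ?thesis by (simp add: card_cartesian_product card_FE)
qed

lemma card_FV: "3 * card (FV n) = 2 * 4 ^ Suc n + 4"
proof (induction n)
  case 0
  have "FV 0 = {V 0, V 1, V 2, V 3}" by (auto simp: FV_def)
  then show ?case by simp
next
  case (Suc n)
  have "card (FV (Suc n)) = card (FV n) + card (new_vertices n)"
    unfolding FV_Suc using finite_FV finite_new_vertices FV_disjoint_new_vertices
    by (rule card_Un_disjoint)
  then show ?case using Suc.IH card_new_vertices by simp
qed

lemma FV_covers_F_Suc_Suc: "e \<in> F (Suc (Suc n)) \<Longrightarrow> e \<inter> FV n \<noteq> {}"
  by (auto simp: F_def mem_FE_Suc_iff mem_FV_iff)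

lemma matching_saturating_FV:
  obtains M where "is_matching (F (Suc (Suc n))) M" and "card M = card (FV n)"
proof -
  define pred where "pred v = (SOME u. (u, v) \<in> FE n)" for v
  have pred: "(pred v, v) \<in> FE n" if "v \<in> FV n" for v
    unfolding pred_def using in_edge_if_mem_FV[OF that] by (rule someI_ex)
  define mate where "mate v = W (pred v) v False" for v
  have mate_edge: "{v, mate v} \<in> F (Suc (Suc n))" if "v \<in> FV n" for v
  proof -
    have "(mate v, v) \<in> FE (Suc n)"
      using pred[OF that] unfolding mate_def mem_FE_Suc_iff by blast
    then show ?thesis unfolding F_def by (force simp: insert_commute)
  qed
  have mate_new: "mate v \<in> new_vertices n" if "v \<in> FV n" for v
    using pred[OF that] unfolding mate_def new_vertices_def by blast
  have mate_distinct: "{a, mate a} \<inter> {b, mate b} = {}" if "a \<in> FV n" "b \<in> FV n" "a \<noteq> b" for a b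
    using that mate_new FV_disjoint_new_vertices by (fastforce simp: mate_def)
  let ?M = "(\<lambda>v. {v, mate v}) ` FV n"
  have matching: "is_matching (F (Suc (Suc n))) ?M"
    unfolding is_matching_def
  proof (intro conjI ballI impI)
    show "?M \<subseteq> F (Suc (Suc n))" using mate_edge by auto
  next
    fix e e' assume "e \<in> ?M" "e' \<in> ?M" "e \<noteq> e'"
    then obtain a b where "a \<in> FV n" "b \<in> FV n" "a \<noteq> b" "e = {a, mate a}" "e' = {b, mate b}"
      by blast
    then show "e \<inter> e' = {}" using mate_distinct by simp
  qed
  have "inj_on (\<lambda>v. {v, mate v}) (FV n)"
    by (rule inj_onI) (use mate_distinct in blast)
  then have "card ?M = card (FV n)" by (rule card_image)
  with matching show ?thesis by (rule that)
qed

lemma matching_number_F_Suc_Suc: "matching_number (F (Suc (Suc n))) = card (FV n)"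
proof -
  obtain M where "is_matching (F (Suc (Suc n))) M" "card M = card (FV n)"
    by (rule matching_saturating_FV)
  moreover have "card M' \<le> card (FV n)" if "is_matching (F (Suc (Suc n))) M'" for M'
    using that finite_FV FV_covers_F_Suc_Suc by (rule card_matching_le_card_cover)
  ultimately show ?thesis by (rule matching_numberI)
qed

theorem theorem1:
  fixes g :: nat
  assumes "g \<ge> 1"
  shows "real (matching_number (F g)) = (4 ^ g + 8) / 6"
proof -
  consider "g = 1" | n where "g = Suc (Suc n)"
    using assms by (metis One_nat_def Suc_le_D le_SucE)
  then show ?thesis
  proof cases
    case 1
    then show ?thesis using matching_number_F_1 by simp
  next
    case (2 n)
    have "3 * real (card (FV n)) = 2 * 4 ^ Suc n + 4"
      using arg_cong[OF card_FV[of n], of real] by simp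
    then show ?thesis by (simp add: 2 matching_number_F_Suc_Suc)
  qed
qed

end
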